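(* Let $k_1 \le k$ be positive integers and let $d \ge 2$ be an integer. Let $\delta = \frac{97}{420}$ and $\phi = 1.86 - \frac{1}{2100}$. Let $\beta(k) = 0$ for $k = 0, \dots, 8$ and $\beta(k) = \frac{1}{3} - \delta$ for $k \ge 9$. Then $$-(k-1)\delta + \sum_{j=1}^{k-1}\left(\frac{2}{d+j} - \frac{1}{d}\right) + H_{k+1} \le \phi - \beta(k).$$
   Context: $H_n = \sum_{i=1}^n \frac{1}{i}$ denotes the $n$-th harmonic number (with $H_0 = 0$). *)

theory Defs
  imports "HOL-Analysis.Analysis"
begin

definition delta_const :: real where "delta_const = 97 / 420"
definition phi_const :: real where "phi_const = 1.86 - 1 / 2100"
definition beta :: "nat \<Rightarrow> real" where
  "beta k = (if k \<le> 8 then 0 else 1/3 - delta_const)"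

end

theory Submission
  imports Defs
begin

(* Each summand 2/(d+j) - 1/d = (d-j)/(d(d+j)) is at most 1/(5j), because
   (d - 2j)^2 + j^2 \<ge> 0, and at most 1/d. With the first bound the left-hand side is
   dominated by -(k-1)\<delta> + H_(k-1)/5 + H_(k+1), which decreases from k = 4 on and is
   below \<phi> - \<beta>(k) unless 3 \<le> k \<le> 6. For those k the second bound settles d \<ge> 13, and
   the finitely many remaining pairs (d, k) are evaluated exactly; the pair d = 5, k = 4
   attains equality. *)

lemma two_div_add_diff_le_inverse:
  fixes d j :: real
  assumes "d > 0" "j \<ge> 0"
  shows "2 / (d + j) - 1 / d \<le> 1 / d"
proof -
  have "2 / (d + j) \<le> 2 / d" using assms by (intro divide_left_mono) auto
  then show ?thesis by simp
qed

lemma two_div_add_diff_le_fifth_inverse: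
  fixes d j :: real
  assumes "d > 0" "j > 0"
  shows "2 / (d + j) - 1 / d \<le> 1 / (5 * j)"
proof -
  have "(2 * d - (d + j)) * (5 * j) \<le> d * (d + j)"
    using sum_squares_ge_zero[of "d - 2 * j" j]
    by (simp add: power2_eq_square algebra_simps)
  then have "(2 * d - (d + j)) / (d * (d + j)) \<le> 1 / (5 * j)"
    using assms by (simp add: divide_simps)
  moreover have "2 / (d + j) - 1 / d = (2 * d - (d + j)) / (d * (d + j))"
    using assms by (simp add: field_simps)
  ultimately show ?thesis by simp
qed

lemma sum_two_div_add_diff_le_harm:
  fixes d n :: nat
  assumes "d > 0"
  shows "(\<Sum>j = 1..n. 2 / (real d + real j) - 1 / real d) \<le> harm n / 5"
proof -
  have "(\<Sum>j = 1..n. 2 / (real d + real j) - 1 / real d) \<le> (\<Sum>j = 1..n. 1 / (5 * real j))"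
    using assms by (intro sum_mono two_div_add_diff_le_fifth_inverse) auto
  also have "\<dots> = harm n / 5"
    by (simp add: harm_def sum_divide_distrib field_simps)
  finally show ?thesis .
qed

lemma sum_two_div_add_diff_le_card:
  fixes d n :: nat
  assumes "d > 0"
  shows "(\<Sum>j = 1..n. 2 / (real d + real j) - 1 / real d) \<le> real n / real d"
proof -
  have "(\<Sum>j = 1..n. 2 / (real d + real j) - 1 / real d) \<le> (\<Sum>j = 1..n. 1 / real d)"
    using assms by (intro sum_mono two_div_add_diff_le_inverse) auto
  then show ?thesis by simp
qed

definition harm_majorant :: "nat \<Rightarrow> real" where
  "harm_majorant k = - (real k - 1) * delta_const + harm (k - 1) / 5 + harm (k + 1)"

lemma harm_majorant_Suc_le:
  assumes "k \<ge> 4"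
  shows "harm_majorant (Suc k) \<le> harm_majorant k"
proof -
  have "harm k = harm (k - 1) + 1 / real k"
    using assms harm_Suc[of "k - 1"] by (simp add: inverse_eq_divide)
  moreover have "harm (Suc k + 1) = harm (k + 1) + 1 / (real k + 2)"
    using harm_Suc[of "k + 1"] by (simp add: inverse_eq_divide add.commute)
  ultimately have "harm_majorant (Suc k)
      = harm_majorant k - delta_const + 1 / (5 * real k) + 1 / (real k + 2)"
    by (simp add: harm_majorant_def algebra_simps)
  moreover have "1 / (5 * real k) \<le> 1 / 20" "1 / (real k + 2) \<le> 1 / 6"
    using assms by (simp_all add: field_simps)
  ultimately show ?thesis unfolding delta_const_def by linarith
qed

lemma harm_majorant_antimono:
  assumes "4 \<le> m" "m \<le> n"
  shows "harm_majorant n \<le> harm_majorant m"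
  using assms(2)
proof (induction n rule: dec_induct)
  case (step n)
  then show ?case using assms(1) harm_majorant_Suc_le[of n] by simp
qed simp

lemma harm_majorant_le:
  assumes "1 \<le> k" "k \<notin> {3..6}"
  shows "harm_majorant k \<le> phi_const - beta k"
proof -
  consider "k = 1" | "k = 2" | "k = 7" | (tail) "k \<ge> 8" using assms by force
  then show ?thesis
  proof cases
    case tail
    have "harm_majorant k \<le> harm_majorant 8" using tail by (intro harm_majorant_antimono) auto
    also have "\<dots> \<le> phi_const - (1/3 - delta_const)"
      by (simp add: harm_majorant_def harm_expand delta_const_def phi_const_def)
    also have "\<dots> \<le> phi_const - beta k" by (simp add: beta_def delta_const_def)
    finally show ?thesis .
  qed (simp_all add: harm_majorant_def harm_expand harm_Suc delta_const_def phi_const_def beta_def)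
qed

lemma large_d_bound_le:
  assumes "k \<in> {3..6}"
  shows "- (real k - 1) * delta_const + (real k - 1) / 13 + harm (k + 1) \<le> phi_const - beta k"
proof -
  have "k \<in> {3, 4, 5, 6}" using assms by (simp add: atLeastAtMost_upt upt_rec)
  then show ?thesis
    by (elim insertE emptyE; simp add: harm_expand delta_const_def phi_const_def beta_def)
qed

lemma small_d_bound_le:
  fixes d k :: nat
  assumes "d \<in> {2..12}" "k \<in> {3..6}"
  shows "- (real k - 1) * delta_const
         + (\<Sum>j = 1..k - 1. 2 / (real d + real j) - 1 / real d)
         + harm (k + 1) \<le> phi_const - beta k"
proof -
  have "k \<in> {3, 4, 5, 6}" using assms(2) by (simp add: atLeastAtMost_upt upt_rec)
  then show ?thesis using assms(1)
    by (elim insertE emptyE;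
        auto simp: atLeastAtMost_upt upt_rec harm_expand delta_const_def phi_const_def beta_def)
qed

theorem mainTheorem3:
  fixes k1 k d :: nat
  assumes "1 \<le> k1" and "k1 \<le> k" and "d \<ge> 2"
  shows "- (real k - 1) * delta_const
         + (\<Sum>j = 1..k - 1. 2 / (real d + real j) - 1 / real d)
         + (harm (k + 1) :: real) \<le> phi_const - beta k"
proof -
  let ?S = "\<Sum>j = 1..k - 1. 2 / (real d + real j) - 1 / real d"
  have "k \<ge> 1" "d > 0" using assms by auto
  consider "k \<notin> {3..6}" | "k \<in> {3..6}" "d \<le> 12" | "k \<in> {3..6}" "d \<ge> 13" by linarith
  then show ?thesis
  proof cases
    case 1
    have "?S \<le> harm (k - 1) / 5" using \<open>d > 0\<close> by (rule sum_two_div_add_diff_le_harm)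
    then show ?thesis using harm_majorant_le[OF \<open>k \<ge> 1\<close> 1] by (simp add: harm_majorant_def)
  next
    case 2
    then show ?thesis using small_d_bound_le[of d k] assms(3) by simp
  next
    case 3
    have "?S \<le> real (k - 1) / real d" using \<open>d > 0\<close> by (rule sum_two_div_add_diff_le_card)
    also have "\<dots> \<le> real (k - 1) / 13" using 3 by (intro divide_left_mono) auto
    also have "\<dots> = (real k - 1) / 13" using \<open>k \<ge> 1\<close> by (simp add: of_nat_diff)
    finally show ?thesis using large_d_bound_le[OF 3(1)] by linarith
  qed
qed

end
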